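(* Let $Q$ be a $\Sigma$-uniformized query with hypergraph $\mathcal{H}=(V,E)$, input size $n$, $p$ machines, let $\Delta>0$, and let $\psi$ be the vector returned by Construct$(Q,\Delta)$. Then for every $R\in Q$ with $\mathrm{vars}(R)\setminus H[\mathbf{V}(\psi)/\Delta]\neq\emptyset$, there exists a relation $R'\in Q$ such that (i) $\mathrm{vars}(R)\setminus H[\mathbf{V}(\psi)/\Delta]\subseteq\mathrm{vars}(R')$ and (ii) $\sum_{x\in\mathrm{vars}(R')}\mathbf{V}_x(\psi)\ge 1$.
   Context: A natural join query $Q$ is a set of relations (distinct schemas) with hypergraph $\mathcal{H}=(V,E)$, $V=\bigcup_R\mathrm{vars}(R)$, $E=\{\mathrm{vars}(R)\}$. $\mathcal{H}[S]$ has vertex set $S$ and edges $\{S\cap e: e\in E, S\cap e\ne\emptyset\}$; $\mathsf{red}$ removes every edge strictly contained in another; $\tau^*$ is the minimum fractional vertex cover value. $\deg_R(Y\mid X)=\max_{\mathbf{x}}|\pi_Y\sigma_{X=\mathbf{x}}R|$. A constraint set for $R$ is $\sigma_R:\mathcal{P}(\mathrm{vars}(R))\to\mathbb{R}_{\ge0}$; $R$ satisfies it if $\deg_R(Y\mid X)\le2\sigma_R(X)/\sigma_R(Y)$ for all $X\subseteq Y\subseteq\mathrm{vars}(R)$; $Q$ is $\Sigma$-uniformized ($\Sigma=\{\sigma_R\}_{R\in Q}$) if each $R$ satisfies $\sigma_R$. A vertex weight mapping is $\mathbf{v}:V\to\mathbb{R}_{\ge0}$. For $R\in Q$ and $U\subseteq\mathrm{vars}(R)$: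 $U$ is heavy in $R$ if $\sigma_R(U)\ge n/p^{\sum_{i\in U}v_i}$, consistent if $\sigma_R(U)\le n/p^{\sum_{i\in U}v_i}$. $\mathbf{v}$ is consistent with $Q$ if every $U\subseteq\mathrm{vars}(R)$ is consistent in $R$ for every $R\in Q$. $H[\mathbf{v}]$ is the union of all sets $U$ heavy in some $R\in Q$. For each $U\subseteq V$ fix a minimum fractional vertex cover $\mathbf{v}^*_U$ of $\mathsf{red}(\mathcal{H}[U])$ (zero outside $U$). For $\psi=(\psi_U)_{U\in\mathcal{P}(V)}$, $\mathbf{V}(\psi)=\sum_U\psi_U\mathbf{v}^*_U$ and $|\psi|_1=\sum_U\psi_U$. Construct$(Q,\Delta)$: set $\psi\gets\mathbf{0}$; while $|\psi|_1<1$ and $H[\mathbf{V}(\psi)/\Delta]\ne V$: let $L=V\setminus H[\mathbf{V}(\psi)/\Delta]$ and set $\psi_L$ to the largest $\delta\in(0,1-|\psi|_1]$ such that $Q$ is consistent with $(\mathbf{V}(\psi)+\delta\mathbf{v}^*_L)/\Delta$; return $\psi$. *)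

theory Defs
  imports Complex_Main
begin

text \<open>A join query is a finite set Q of relation names of type 'r; vars R is the schema of R,
  tuples R the set of tuples of R (partial maps with domain vars R), sigma R its constraint set.\<close>

definition hypV :: "'r set \<Rightarrow> ('r \<Rightarrow> 'v set) \<Rightarrow> 'v set" where
  "hypV Q vars = \<Union> (vars ` Q)"

definition ind_edges :: "'r set \<Rightarrow> ('r \<Rightarrow> 'v set) \<Rightarrow> 'v set \<Rightarrow> 'v set set" where
  "ind_edges Q vars S = {S \<inter> vars R | R. R \<in> Q \<and> S \<inter> vars R \<noteq> {}}"

definition red :: "'v set set \<Rightarrow> 'v set set" where
  "red F = {e \<in> F. \<not> (\<exists>f\<in>F. e \<subset> f)}"

definition frac_vc :: "'v set \<Rightarrow> 'v set set \<Rightarrow> ('v \<Rightarrow> real) \<Rightarrow> bool" where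
  "frac_vc S F v \<longleftrightarrow> (\<forall>x\<in>S. v x \<ge> 0) \<and> (\<forall>f\<in>F. (\<Sum>x\<in>f. v x) \<ge> 1)"

definition min_frac_vc :: "'v set \<Rightarrow> 'v set set \<Rightarrow> ('v \<Rightarrow> real) \<Rightarrow> bool" where
  "min_frac_vc S F v \<longleftrightarrow> frac_vc S F v \<and>
     (\<forall>w. frac_vc S F w \<longrightarrow> (\<Sum>x\<in>S. v x) \<le> (\<Sum>x\<in>S. w x))"

definition deg :: "('v \<rightharpoonup> 'd) set \<Rightarrow> 'v set \<Rightarrow> 'v set \<Rightarrow> nat" where
  "deg T X Y = Max (insert 0 ((\<lambda>x. card {t |` Y | t. t \<in> T \<and> t |` X = x}) ` ((\<lambda>t. t |` X) ` T)))"

definition satisfies :: "('v \<rightharpoonup> 'd) set \<Rightarrow> 'v set \<Rightarrow> ('v set \<Rightarrow> real) \<Rightarrow> bool" where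
  "satisfies T S sg \<longleftrightarrow> (\<forall>X Y. X \<subseteq> Y \<and> Y \<subseteq> S \<and> sg Y > 0 \<longrightarrow>
      real (deg T X Y) \<le> 2 * sg X / sg Y)"

definition uniformized :: "'r set \<Rightarrow> ('r \<Rightarrow> 'v set) \<Rightarrow> ('r \<Rightarrow> ('v \<rightharpoonup> 'd) set)
    \<Rightarrow> ('r \<Rightarrow> 'v set \<Rightarrow> real) \<Rightarrow> bool" where
  "uniformized Q vars tuples sigma \<longleftrightarrow> (\<forall>R\<in>Q. satisfies (tuples R) (vars R) (sigma R))"

definition heavy :: "('r \<Rightarrow> 'v set \<Rightarrow> real) \<Rightarrow> nat \<Rightarrow> nat \<Rightarrow> ('v \<Rightarrow> real) \<Rightarrow> 'r \<Rightarrow> 'v set \<Rightarrow> bool" where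
  "heavy sigma n p v R U \<longleftrightarrow> sigma R U \<ge> real n / (real p powr (\<Sum>i\<in>U. v i))"

definition consistent_in :: "('r \<Rightarrow> 'v set \<Rightarrow> real) \<Rightarrow> nat \<Rightarrow> nat \<Rightarrow> ('v \<Rightarrow> real) \<Rightarrow> 'r \<Rightarrow> 'v set \<Rightarrow> bool" where
  "consistent_in sigma n p v R U \<longleftrightarrow> sigma R U \<le> real n / (real p powr (\<Sum>i\<in>U. v i))"

definition consistent :: "'r set \<Rightarrow> ('r \<Rightarrow> 'v set) \<Rightarrow> ('r \<Rightarrow> 'v set \<Rightarrow> real) \<Rightarrow> nat \<Rightarrow> nat
    \<Rightarrow> ('v \<Rightarrow> real) \<Rightarrow> bool" where
  "consistent Q vars sigma n p v \<longleftrightarrow> (\<forall>R\<in>Q. \<forall>U. U \<subseteq> vars R \<longrightarrow> consistent_in sigma n p v R U)"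

definition Hset :: "'r set \<Rightarrow> ('r \<Rightarrow> 'v set) \<Rightarrow> ('r \<Rightarrow> 'v set \<Rightarrow> real) \<Rightarrow> nat \<Rightarrow> nat
    \<Rightarrow> ('v \<Rightarrow> real) \<Rightarrow> 'v set" where
  "Hset Q vars sigma n p v = \<Union> {U. \<exists>R\<in>Q. U \<subseteq> vars R \<and> heavy sigma n p v R U}"

definition Vpsi :: "'v set \<Rightarrow> ('v set \<Rightarrow> 'v \<Rightarrow> real) \<Rightarrow> ('v set \<Rightarrow> real) \<Rightarrow> 'v \<Rightarrow> real" where
  "Vpsi V vstar psi = (\<lambda>x. \<Sum>U\<in>Pow V. psi U * vstar U x)"

definition norm1 :: "'v set \<Rightarrow> ('v set \<Rightarrow> real) \<Rightarrow> real" where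
  "norm1 V psi = (\<Sum>U\<in>Pow V. psi U)"

definition Hpsi :: "'r set \<Rightarrow> ('r \<Rightarrow> 'v set) \<Rightarrow> ('r \<Rightarrow> 'v set \<Rightarrow> real) \<Rightarrow> nat \<Rightarrow> nat
    \<Rightarrow> ('v set \<Rightarrow> 'v \<Rightarrow> real) \<Rightarrow> real \<Rightarrow> ('v set \<Rightarrow> real) \<Rightarrow> 'v set" where
  "Hpsi Q vars sigma n p vstar Delta psi =
     Hset Q vars sigma n p (\<lambda>x. Vpsi (hypV Q vars) vstar psi x / Delta)"

definition loop_cond where
  "loop_cond Q vars sigma n p vstar Delta psi \<longleftrightarrow>
     norm1 (hypV Q vars) psi < 1 \<and> Hpsi Q vars sigma n p vstar Delta psi \<noteq> hypV Q vars"

text \<open>One iteration of the while loop of Construct: L = V - H, psi_L is set to the largest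
  admissible delta (the step exists only if such a largest delta exists).\<close>
definition construct_step where
  "construct_step Q vars sigma n p vstar Delta psi psi' \<longleftrightarrow>
     loop_cond Q vars sigma n p vstar Delta psi \<and>
     (let V = hypV Q vars;
          L = V - Hpsi Q vars sigma n p vstar Delta psi;
          D = {d. 0 < d \<and> d \<le> 1 - norm1 V psi \<and>
                  consistent Q vars sigma n p (\<lambda>x. (Vpsi V vstar psi x + d * vstar L x) / Delta)}
      in \<exists>\<delta>. \<delta> \<in> D \<and> (\<forall>d\<in>D. d \<le> \<delta>) \<and> psi' = psi(L := \<delta>))"

definition construct_output where
  "construct_output Q vars sigma n p vstar Delta psi \<longleftrightarrow>
     (construct_step Q vars sigma n p vstar Delta)\<^sup>*\<^sup>* (\<lambda>_. 0) psi \<and>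
     \<not> loop_cond Q vars sigma n p vstar Delta psi"

end

theory Submission
  imports Defs
begin

text \<open>Along Construct the support of psi stays a chain of sets, each containing the current
  light set V - H[V(psi)/Delta]; so if the loop stops while some relation R still meets the light
  set, then |psi|_1 has reached 1. A weighting that ranks a variable by how many support sets contain it
  selects a relation R' containing vars R - H whose trace on every support set U is maximal among
  the traces of all relations. That trace is then an edge of red(H[U]), so v*_U puts weight at
  least 1 on vars R'; summing over U with the weights psi_U gives the bound.\<close>

lemma Hset_mono:
  assumes "p \<ge> 1" and "\<And>x. v x \<le> w x"
  shows "Hset Q vars sigma n p v \<subseteq> Hset Q vars sigma n p w"
proof -
  have "real p powr (\<Sum>i\<in>U. v i) \<le> real p powr (\<Sum>i\<in>U. w i)" for U :: "'a set"
    using assms by (intro powr_mono sum_mono) auto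
  then have "real n / real p powr (\<Sum>i\<in>U. w i) \<le> real n / real p powr (\<Sum>i\<in>U. v i)" for U
    using assms(1) by (intro divide_left_mono) auto
  then have "heavy sigma n p v R U \<Longrightarrow> heavy sigma n p w R U" for R U
    unfolding heavy_def by (meson order_trans)
  then show ?thesis
    unfolding Hset_def by blast
qed

lemma Vpsi_fun_upd:
  assumes "finite V" and "L \<subseteq> V"
  shows "Vpsi V vstar (psi(L := \<delta>)) x = Vpsi V vstar psi x + (\<delta> - psi L) * vstar L x"
  using assms unfolding Vpsi_def
  by (simp add: sum.remove[of "Pow V" L] algebra_simps)

lemma norm1_fun_upd:
  assumes "finite V" and "L \<subseteq> V"
  shows "norm1 V (psi(L := \<delta>)) = norm1 V psi + (\<delta> - psi L)"
  using assms unfolding norm1_def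
  by (simp add: sum.remove[of "Pow V" L] algebra_simps)

lemma norm1_le_sum_Vpsi:
  assumes "finite V" and "finite S"
    and "\<And>U. U \<subseteq> V \<Longrightarrow> 0 \<le> psi U"
    and "\<And>U. U \<subseteq> V \<Longrightarrow> psi U \<noteq> 0 \<Longrightarrow> 1 \<le> (\<Sum>x\<in>S. vstar U x)"
  shows "norm1 V psi \<le> (\<Sum>x\<in>S. Vpsi V vstar psi x)"
proof -
  have "norm1 V psi \<le> (\<Sum>U\<in>Pow V. psi U * (\<Sum>x\<in>S. vstar U x))"
    unfolding norm1_def
  proof (rule sum_mono)
    fix U assume "U \<in> Pow V"
    then show "psi U \<le> psi U * (\<Sum>x\<in>S. vstar U x)"
      using assms(3,4)[of U] by (cases "psi U = 0") (auto simp: mult_le_cancel_left1)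
  qed
  also have "\<dots> = (\<Sum>x\<in>S. Vpsi V vstar psi x)"
    unfolding Vpsi_def by (simp add: sum_distrib_left sum.swap[of _ S])
  finally show ?thesis .
qed

lemma chain_weight_strict_mono:
  fixes C :: "'a set set"
  assumes "finite V" and "finite C" and "chain\<^sub>\<subseteq> C"
  obtains w :: "'a \<Rightarrow> real" where
    "\<And>A B U. A \<subseteq> V \<Longrightarrow> B \<subseteq> V \<Longrightarrow> U \<in> C \<Longrightarrow> A \<inter> U \<subset> B \<inter> U \<Longrightarrow> sum w A < sum w B"
proof
  \<comment> \<open>M exceeds card V, so a single variable of U outweighs all variables outside U.\<close>
  define M :: real where "M = real (card V) + 1"
  define w where "w x = M ^ card {W \<in> C. x \<in> W}" for x
  have w_nonneg: "0 \<le> w x" for x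
    by (simp add: w_def M_def)
  fix A B U
  assume A: "A \<subseteq> V" and B: "B \<subseteq> V" and U: "U \<in> C" and trace: "A \<inter> U \<subset> B \<inter> U"
  define d where "d = card {W \<in> C. U \<subset> W}"
  have w_in: "M ^ Suc d \<le> w x" if "x \<in> U" for x
  proof -
    have "Suc d = card (insert U {W \<in> C. U \<subset> W})"
      using assms(2) by (simp add: d_def)
    also have "\<dots> \<le> card {W \<in> C. x \<in> W}"
      using assms(2) U that by (intro card_mono) auto
    finally show ?thesis
      unfolding w_def by (intro power_increasing) (auto simp: M_def)
  qed
  have w_out: "w x \<le> M ^ d" if "x \<notin> U" for x
  proof -
    have "{W \<in> C. x \<in> W} \<subseteq> {W \<in> C. U \<subset> W}"
      using assms(3) U that unfolding chain_subset_def by blast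
    then have "card {W \<in> C. x \<in> W} \<le> d"
      unfolding d_def using assms(2) by (intro card_mono) auto
    then show ?thesis
      unfolding w_def by (intro power_increasing) (auto simp: M_def)
  qed
  obtain x0 where x0: "x0 \<in> B \<inter> U" "x0 \<notin> A \<inter> U"
    using trace by blast
  have fin: "finite A" "finite B"
    using A B assms(1) finite_subset by auto
  have "sum w A = sum w (A \<inter> U) + sum w (A - U)"
    using fin by (simp add: sum.Int_Diff)
  also have "sum w (A - U) \<le> real (card V) * M ^ d"
  proof -
    have "sum w (A - U) \<le> real (card (A - U)) * M ^ d"
      using sum_bounded_above[of "A - U" w "M ^ d"] w_out by auto
    also have "\<dots> \<le> real (card V) * M ^ d"
      using A assms(1) by (intro mult_right_mono) (auto intro: card_mono simp: M_def)
    finally show ?thesis .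
  qed
  also have "real (card V) * M ^ d < M ^ Suc d"
    by (simp add: M_def)
  also have "\<dots> \<le> w x0"
    using w_in x0 by blast
  also have "sum w (A \<inter> U) + w x0 = sum w (insert x0 (A \<inter> U))"
    using fin x0 by simp
  also have "\<dots> \<le> sum w B"
    using fin x0 trace w_nonneg by (intro sum_mono2) auto
  finally show "sum w A < sum w B"
    by simp
qed

lemma exists_maximal_trace_on_chain:
  fixes f :: "'b \<Rightarrow> 'a set"
  assumes "finite A" and "finite V" and "\<forall>a\<in>A. f a \<subseteq> V"
    and "finite C" and "chain\<^sub>\<subseteq> C" and "\<forall>U\<in>C. e \<subseteq> U"
    and "a0 \<in> A" and "e \<subseteq> f a0"
  obtains a where "a \<in> A" and "e \<subseteq> f a"
    and "\<And>b U. b \<in> A \<Longrightarrow> U \<in> C \<Longrightarrow> \<not> f a \<inter> U \<subset> f b \<inter> U"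
proof -
  obtain w :: "'a \<Rightarrow> real" where w:
    "\<And>A B U. A \<subseteq> V \<Longrightarrow> B \<subseteq> V \<Longrightarrow> U \<in> C \<Longrightarrow> A \<inter> U \<subset> B \<inter> U \<Longrightarrow> sum w A < sum w B"
    using chain_weight_strict_mono assms(2,4,5) by blast
  define A' where "A' = {a \<in> A. e \<subseteq> f a}"
  have "finite A'" and "A' \<noteq> {}"
    using assms(1,7,8) unfolding A'_def by auto
  then have "Max ((\<lambda>a. sum w (f a)) ` A') \<in> (\<lambda>a. sum w (f a)) ` A'"
    by (intro Max_in) auto
  then obtain a where a: "a \<in> A'" and a_Max: "sum w (f a) = Max ((\<lambda>a. sum w (f a)) ` A')"
    by auto
  have a_max: "sum w (f b) \<le> sum w (f a)" if "b \<in> A'" for b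
    unfolding a_Max using \<open>finite A'\<close> that by simp
  show thesis
  proof
    show "a \<in> A" "e \<subseteq> f a"
      using a by (auto simp: A'_def)
    fix b U assume "b \<in> A" "U \<in> C"
    show "\<not> f a \<inter> U \<subset> f b \<inter> U"
    proof
      assume trace: "f a \<inter> U \<subset> f b \<inter> U"
      then have "b \<in> A'"
        using \<open>b \<in> A\<close> \<open>U \<in> C\<close> \<open>e \<subseteq> f a\<close> assms(6) unfolding A'_def by blast
      then show False
        using w[OF _ _ \<open>U \<in> C\<close> trace] a_max[of b] a \<open>b \<in> A\<close> assms(3)
        unfolding A'_def by force
    qed
  qed
qed

lemma maximal_trace_in_red_ind_edges:
  assumes "R \<in> Q" and "vars R \<inter> U \<noteq> {}"
    and "\<And>R'. R' \<in> Q \<Longrightarrow> \<not> vars R \<inter> U \<subset> vars R' \<inter> U"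
  shows "vars R \<inter> U \<in> red (ind_edges Q vars U)"
  using assms unfolding red_def ind_edges_def by (auto simp: Int_commute)

lemma frac_vc_sum_ge_one:
  assumes "frac_vc U F v" and "S \<inter> U \<in> F" and "finite S" and "\<And>x. x \<notin> U \<Longrightarrow> v x = 0"
  shows "1 \<le> (\<Sum>x\<in>S. v x)"
proof -
  have "(\<Sum>x\<in>S. v x) = (\<Sum>x\<in>S \<inter> U. v x)"
    using assms(3,4) by (intro sum.mono_neutral_right) auto
  then show ?thesis
    using assms(1,2) unfolding frac_vc_def by simp
qed

lemma finite_hypV: "finite Q \<Longrightarrow> \<forall>R\<in>Q. finite (vars R) \<Longrightarrow> finite (hypV Q vars)"
  by (simp add: hypV_def)

lemma vars_subset_hypV: "R \<in> Q \<Longrightarrow> vars R \<subseteq> hypV Q vars"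
  by (auto simp: hypV_def)

lemma exists_relation_covered_on_chain:
  assumes "finite Q" and "\<forall>R\<in>Q. finite (vars R)"
    and "C \<subseteq> Pow (hypV Q vars)" and "chain\<^sub>\<subseteq> C"
    and vc: "\<And>U. U \<in> C \<Longrightarrow>
      frac_vc U (red (ind_edges Q vars U)) (vstar U) \<and> (\<forall>x. x \<notin> U \<longrightarrow> vstar U x = 0)"
    and "e \<noteq> {}" and "\<forall>U\<in>C. e \<subseteq> U" and "R \<in> Q" and "e \<subseteq> vars R"
  obtains R' where "R' \<in> Q" and "e \<subseteq> vars R'"
    and "\<And>U. U \<in> C \<Longrightarrow> 1 \<le> (\<Sum>x\<in>vars R'. vstar U x)"
proof -
  have finite_V: "finite (hypV Q vars)"
    using finite_hypV assms(1,2) .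
  have vars_V: "\<forall>R\<in>Q. vars R \<subseteq> hypV Q vars"
    by (simp add: vars_subset_hypV)
  have "finite C"
    using finite_subset[OF assms(3)] finite_V by simp
  obtain R' where "R' \<in> Q" and "e \<subseteq> vars R'"
    and maximal: "\<And>R'' U. R'' \<in> Q \<Longrightarrow> U \<in> C \<Longrightarrow> \<not> vars R' \<inter> U \<subset> vars R'' \<inter> U"
    by (rule exists_maximal_trace_on_chain[OF assms(1) finite_V vars_V \<open>finite C\<close> assms(4,7,8,9)]) blast
  have "1 \<le> (\<Sum>x\<in>vars R'. vstar U x)" if "U \<in> C" for U
  proof -
    have "vars R' \<inter> U \<noteq> {}"
      using assms(6,7) \<open>e \<subseteq> vars R'\<close> that by blast
    then have "vars R' \<inter> U \<in> red (ind_edges Q vars U)"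
      by (rule maximal_trace_in_red_ind_edges[OF \<open>R' \<in> Q\<close>]) (use maximal that in blast)
    then show ?thesis
      using frac_vc_sum_ge_one vc[OF that] assms(2) \<open>R' \<in> Q\<close> by blast
  qed
  with \<open>R' \<in> Q\<close> \<open>e \<subseteq> vars R'\<close> show thesis
    using that by blast
qed

context
  fixes Q :: "'r set" and vars :: "'r \<Rightarrow> 'v set" and sigma :: "'r \<Rightarrow> 'v set \<Rightarrow> real"
    and n p :: nat and Delta :: real and vstar :: "'v set \<Rightarrow> 'v \<Rightarrow> real"
begin

abbreviation light :: "('v set \<Rightarrow> real) \<Rightarrow> 'v set" where
  "light psi \<equiv> hypV Q vars - Hpsi Q vars sigma n p vstar Delta psi"

text \<open>The last clause makes every iteration write to a coordinate that is still 0, so that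
  V(psi) only grows along the loop.\<close>

definition construct_inv :: "('v set \<Rightarrow> real) \<Rightarrow> bool" where
  "construct_inv psi \<longleftrightarrow>
     (\<forall>U. psi U \<noteq> 0 \<longrightarrow> 0 < psi U \<and> light psi \<subseteq> U) \<and> chain\<^sub>\<subseteq> {U. psi U \<noteq> 0} \<and>
     (psi (light psi) \<noteq> 0 \<longrightarrow> (\<forall>psi'. \<not> construct_step Q vars sigma n p vstar Delta psi psi'))"

lemma construct_output_norm1:
  assumes "construct_output Q vars sigma n p vstar Delta psi" and "light psi \<noteq> {}"
  shows "1 \<le> norm1 (hypV Q vars) psi"
  using assms unfolding construct_output_def loop_cond_def by auto

context
  assumes finite_V: "finite (hypV Q vars)" and p_ge_1: "p \<ge> 1" and Delta_pos: "0 < Delta"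
    and vstar_vc: "\<forall>U. U \<subseteq> hypV Q vars \<longrightarrow>
      min_frac_vc U (red (ind_edges Q vars U)) (vstar U) \<and> (\<forall>x. x \<notin> U \<longrightarrow> vstar U x = 0)"
begin

lemma vstar_nonneg:
  assumes "U \<subseteq> hypV Q vars"
  shows "0 \<le> vstar U x"
proof -
  have "frac_vc U (red (ind_edges Q vars U)) (vstar U)" and "x \<notin> U \<Longrightarrow> vstar U x = 0"
    using vstar_vc assms unfolding min_frac_vc_def by blast+
  then show ?thesis
    unfolding frac_vc_def by (cases "x \<in> U") auto
qed

lemma light_fun_upd_subset:
  assumes "L \<subseteq> hypV Q vars" and "psi L = 0" and "0 \<le> \<delta>"
  shows "light (psi(L := \<delta>)) \<subseteq> light psi"
proof -
  have "Vpsi (hypV Q vars) vstar psi x / Delta \<le> Vpsi (hypV Q vars) vstar (psi(L := \<delta>)) x / Delta" for x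
    using Vpsi_fun_upd[OF finite_V assms(1)] vstar_nonneg[OF assms(1)] assms(2,3) Delta_pos
    by (intro divide_right_mono) auto
  then have "Hpsi Q vars sigma n p vstar Delta psi \<subseteq> Hpsi Q vars sigma n p vstar Delta (psi(L := \<delta>))"
    unfolding Hpsi_def by (rule Hset_mono[OF p_ge_1])
  then show ?thesis
    by blast
qed

lemma construct_step_stalls_on_same_light:
  assumes step: "construct_step Q vars sigma n p vstar Delta psi psi'"
    and "psi (light psi) = 0" and same_light: "light psi' = light psi"
  shows "\<not> construct_step Q vars sigma n p vstar Delta psi' psi''"
proof
  assume step': "construct_step Q vars sigma n p vstar Delta psi' psi''"
  define L where "L = light psi"
  define D where "D psi L = {d. 0 < d \<and> d \<le> 1 - norm1 (hypV Q vars) psi \<and>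
    consistent Q vars sigma n p (\<lambda>x. (Vpsi (hypV Q vars) vstar psi x + d * vstar L x) / Delta)}"
    for psi L
  obtain \<delta> where \<delta>: "\<delta> \<in> D psi L" and \<delta>_max: "\<forall>d\<in>D psi L. d \<le> \<delta>"
    and psi': "psi' = psi(L := \<delta>)"
    using step unfolding construct_step_def Let_def D_def L_def by blast
  obtain d where d: "d \<in> D psi' L"
    using step' unfolding construct_step_def Let_def D_def L_def same_light by blast
  have L_V: "L \<subseteq> hypV Q vars"
    by (simp add: L_def)
  \<comment> \<open>psi' already carries V(psi) + delta v*_L, so d could have been added to delta.\<close>
  have "\<delta> + d \<in> D psi L"
    using \<delta> d assms(2) Vpsi_fun_upd[OF finite_V L_V] norm1_fun_upd[OF finite_V L_V]
    unfolding D_def psi' L_def by (simp add: algebra_simps)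
  then show False
    using \<delta>_max d by (force simp: D_def)
qed

lemma construct_step_inv:
  assumes step: "construct_step Q vars sigma n p vstar Delta psi psi'" and inv: "construct_inv psi"
  shows "construct_inv psi'"
proof -
  define L where "L = light psi"
  obtain \<delta> where \<delta>_pos: "0 < \<delta>" and psi': "psi' = psi(L := \<delta>)"
    using step unfolding construct_step_def Let_def L_def by auto
  have psi_L: "psi L = 0"
    using inv step unfolding construct_inv_def L_def by blast
  have light': "light psi' \<subseteq> L"
    using light_fun_upd_subset[of L psi \<delta>] psi_L \<delta>_pos unfolding psi' L_def by simp
  have "\<forall>U. psi' U \<noteq> 0 \<longrightarrow> 0 < psi' U \<and> light psi' \<subseteq> U"
    using inv light' \<delta>_pos unfolding construct_inv_def psi' L_def by auto
  moreover have "chain\<^sub>\<subseteq> {U. psi' U \<noteq> 0}"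
    using inv unfolding construct_inv_def chain_subset_def psi' L_def by auto
  moreover have "\<not> construct_step Q vars sigma n p vstar Delta psi' psi''"
    if nonzero: "psi' (light psi') \<noteq> 0" for psi''
  proof -
    have "light psi' = L"
    proof (rule ccontr)
      assume "light psi' \<noteq> L"
      then have "L \<subseteq> light psi'"
        using inv nonzero unfolding construct_inv_def psi' L_def by auto
      with light' \<open>light psi' \<noteq> L\<close> show False
        by blast
    qed
    then show ?thesis
      using construct_step_stalls_on_same_light step psi_L unfolding L_def by blast
  qed
  ultimately show ?thesis
    unfolding construct_inv_def by blast
qed

lemma construct_output_support:
  assumes "construct_output Q vars sigma n p vstar Delta psi"
  shows "0 \<le> psi U" and "psi U \<noteq> 0 \<Longrightarrow> light psi \<subseteq> U" and "chain\<^sub>\<subseteq> {U. psi U \<noteq> 0}"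
proof -
  have "(construct_step Q vars sigma n p vstar Delta)\<^sup>*\<^sup>* (\<lambda>_. 0) psi"
    using assms unfolding construct_output_def by blast
  then have "construct_inv psi"
  proof induction
    case base
    show ?case
      by (simp add: construct_inv_def chain_subset_def)
  next
    case (step psi psi')
    then show ?case
      using construct_step_inv by blast
  qed
  then show "0 \<le> psi U" and "psi U \<noteq> 0 \<Longrightarrow> light psi \<subseteq> U" and "chain\<^sub>\<subseteq> {U. psi U \<noteq> 0}"
    unfolding construct_inv_def by (fastforce simp: less_eq_real_def)+
qed

end

end

theorem lemma4p12:
  fixes Q :: "'r set" and vars :: "'r \<Rightarrow> 'v set" and tuples :: "'r \<Rightarrow> ('v \<rightharpoonup> 'd) set"
    and sigma :: "'r \<Rightarrow> 'v set \<Rightarrow> real" and n p :: nat and Delta :: real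
    and vstar :: "'v set \<Rightarrow> 'v \<Rightarrow> real" and psi :: "'v set \<Rightarrow> real"
  assumes "finite Q"
    and "\<forall>R\<in>Q. finite (vars R)"
    and "inj_on vars Q"
    and "\<forall>R\<in>Q. finite (tuples R) \<and> (\<forall>t\<in>tuples R. dom t = vars R)"
    and "\<forall>R\<in>Q. \<forall>U. U \<subseteq> vars R \<longrightarrow> sigma R U \<ge> 0"
    and "uniformized Q vars tuples sigma"
    and "n = (\<Sum>R\<in>Q. card (tuples R))"
    and "p \<ge> 1"
    and "Delta > 0"
    and "\<forall>U. U \<subseteq> hypV Q vars \<longrightarrow>
           min_frac_vc U (red (ind_edges Q vars U)) (vstar U) \<and> (\<forall>x. x \<notin> U \<longrightarrow> vstar U x = 0)"
    and "construct_output Q vars sigma n p vstar Delta psi"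
  shows "\<forall>R\<in>Q. vars R - Hpsi Q vars sigma n p vstar Delta psi \<noteq> {} \<longrightarrow>
           (\<exists>R'\<in>Q. vars R - Hpsi Q vars sigma n p vstar Delta psi \<subseteq> vars R' \<and>
                    (\<Sum>x\<in>vars R'. Vpsi (hypV Q vars) vstar psi x) \<ge> 1)"
proof (intro ballI impI)
  let ?V = "hypV Q vars" and ?H = "Hpsi Q vars sigma n p vstar Delta psi"
  fix R assume "R \<in> Q" and light_R: "vars R - ?H \<noteq> {}"
  have vars_R: "vars R \<subseteq> ?V"
    using \<open>R \<in> Q\<close> by (rule vars_subset_hypV)
  note support = construct_output_support[OF finite_hypV[OF assms(1,2)] assms(8,9,10,11)]
  define C where "C = {U \<in> Pow ?V. psi U \<noteq> 0}"
  have "C \<subseteq> Pow ?V" and "chain\<^sub>\<subseteq> C"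
    using support(3) unfolding C_def chain_subset_def by auto
  moreover have "\<And>U. U \<in> C \<Longrightarrow>
      frac_vc U (red (ind_edges Q vars U)) (vstar U) \<and> (\<forall>x. x \<notin> U \<longrightarrow> vstar U x = 0)"
    using assms(10) unfolding C_def min_frac_vc_def by blast
  moreover have "\<forall>U\<in>C. vars R - ?H \<subseteq> U"
    using support(2) vars_R unfolding C_def by blast
  ultimately obtain R' where "R' \<in> Q" and "vars R - ?H \<subseteq> vars R'"
    and cover: "\<And>U. U \<in> C \<Longrightarrow> 1 \<le> (\<Sum>x\<in>vars R'. vstar U x)"
    using exists_relation_covered_on_chain[OF assms(1,2) _ _ _ light_R _ \<open>R \<in> Q\<close> Diff_subset]
    by metis
  have "1 \<le> norm1 ?V psi"
    using construct_output_norm1[OF assms(11)] light_R vars_R by blast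
  also have "\<dots> \<le> (\<Sum>x\<in>vars R'. Vpsi ?V vstar psi x)"
    by (rule norm1_le_sum_Vpsi[OF finite_hypV[OF assms(1,2)]])
      (use assms(2) \<open>R' \<in> Q\<close> support(1) cover in \<open>auto simp: C_def\<close>)
  finally show "\<exists>R'\<in>Q. vars R - ?H \<subseteq> vars R' \<and> 1 \<le> (\<Sum>x\<in>vars R'. Vpsi ?V vstar psi x)"
    using \<open>R' \<in> Q\<close> \<open>vars R - ?H \<subseteq> vars R'\<close> by blast
qed

end
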